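(* Let $G$ be a finite simple graph, let $k\ge 0$, and let $P$ be a $(3k+2)$-string based at a vertex $v$ of $G$. Let $w$ be the vertex of $P$ adjacent to $v$, and set $U=N_G(v)\setminus\{w\}$. Then the inclusion $I(G\setminus U)\hookrightarrow I(G)$ is a homotopy equivalence.
   Context: For a finite simple graph $G$, $I(G)$ is the independence complex (simplicial complex on $V(G)$ whose simplices are the independent sets). For $S\subseteq V(G)$, $G\setminus S$ is the induced subgraph on $V(G)\setminus S$. $N_G(v)$ is the set of neighbours of $v$. An $n$-string based at $v$ in $G$ is an induced subgraph $P$ of $G$ such that $P$ is isomorphic to the path graph with $n$ vertices, $v$ is an endpoint of $P$, and every vertex of $P$ other than $v$ is adjacent to no vertex of $V(G)\setminus V(P)$. *)

theory Defs
  imports "HOL-Analysis.Analysis"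
begin

definition simple_graph :: "'a set \<Rightarrow> ('a \<Rightarrow> 'a \<Rightarrow> bool) \<Rightarrow> bool" where
  "simple_graph V E \<longleftrightarrow> finite V \<and> (\<forall>x y. E x y \<longrightarrow> E y x)
     \<and> (\<forall>x. \<not> E x x) \<and> (\<forall>x y. E x y \<longrightarrow> x \<in> V \<and> y \<in> V)"

definition nbhd :: "'a set \<Rightarrow> ('a \<Rightarrow> 'a \<Rightarrow> bool) \<Rightarrow> 'a \<Rightarrow> 'a set" where
  "nbhd V E v = {u \<in> V. E v u}"

definition indep_complex :: "'a set \<Rightarrow> ('a \<Rightarrow> 'a \<Rightarrow> bool) \<Rightarrow> 'a set set" where
  "indep_complex W E = {S. S \<subseteq> W \<and> (\<forall>x\<in>S. \<forall>y\<in>S. \<not> E x y)}"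

text \<open>Geometric realization of a simplicial complex K (a downward closed
  family of finite vertex sets): the points are the barycentric coordinate
  functions whose support is a face of K, with the subspace topology of
  the product topology on functions to the reals.\<close>
definition realization :: "'a set set \<Rightarrow> ('a \<Rightarrow> real) topology" where
  "realization K = subtopology (powertop_real UNIV)
     {f. (\<forall>x. 0 \<le> f x) \<and> finite {x. f x \<noteq> 0} \<and> {x. f x \<noteq> 0} \<in> K
         \<and> sum f {x. f x \<noteq> 0} = 1}"

definition homotopy_equivalence_map ::
  "'a topology \<Rightarrow> 'b topology \<Rightarrow> ('a \<Rightarrow> 'b) \<Rightarrow> bool" where
  "homotopy_equivalence_map X Y f \<longleftrightarrow> continuous_map X Y f \<and>
     (\<exists>g. continuous_map Y X g \<and>
          homotopic_with (\<lambda>x. True) X X (g \<circ> f) id \<and>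
          homotopic_with (\<lambda>x. True) Y Y (f \<circ> g) id)"

text \<open>An n-string based at v, given as the list ps = [p_0,...,p_{n-1}] of its
  vertices in path order, p_0 = v: distinct vertices of G, the induced
  subgraph is exactly the path p_0 - p_1 - ... - p_{n-1}, and every p_i with
  i \<ge> 1 has all its neighbours inside the string.\<close>
definition is_string :: "'a set \<Rightarrow> ('a \<Rightarrow> 'a \<Rightarrow> bool) \<Rightarrow> nat \<Rightarrow> 'a \<Rightarrow> 'a list \<Rightarrow> bool" where
  "is_string V E n v ps \<longleftrightarrow> length ps = n \<and> n \<ge> 1 \<and> distinct ps \<and> set ps \<subseteq> V
     \<and> ps ! 0 = v
     \<and> (\<forall>i<n. \<forall>j<n. E (ps ! i) (ps ! j) \<longleftrightarrow> (i = j + 1 \<or> j = i + 1))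
     \<and> (\<forall>i. 1 \<le> i \<and> i < n \<longrightarrow> (\<forall>u\<in>V. E (ps ! i) u \<longrightarrow> u \<in> set ps))"

end

theory Submission
  imports Defs
begin

text \<open>Write p_0 = v, p_1 = w, ..., p_(3k+1) for the string and T = {p_2, p_5, ..., p_(3k-1)}.
  By the fold lemma (deleting vertices whose neighbourhood contains that of another vertex
  does not change the homotopy type of the independence complex), T can be deleted from
  any induced subgraph containing the string, working from the far end. Once T is gone,
  v is the only neighbour of w, so w dominates every vertex of U and U can be deleted from
  G - T as well. Thus I(G - U - T) includes by homotopy equivalences both into I(G - U) and
  into I(G), and two-out-of-three gives the claim.\<close>

lemma homotopy_equivalence_map_id: "homotopy_equivalence_map X X id"
  unfolding homotopy_equivalence_map_def by (intro conjI exI[of _ id]) auto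

lemma homotopy_equivalence_map_compose:
  assumes "homotopy_equivalence_map X Y f" "homotopy_equivalence_map Y Z g"
  shows "homotopy_equivalence_map X Z (g \<circ> f)"
proof -
  obtain f' where f: "continuous_map X Y f" "continuous_map Y X f'"
    "homotopic_with (\<lambda>x. True) X X (f' \<circ> f) id" "homotopic_with (\<lambda>x. True) Y Y (f \<circ> f') id"
    using assms(1) unfolding homotopy_equivalence_map_def by blast
  obtain g' where g: "continuous_map Y Z g" "continuous_map Z Y g'"
    "homotopic_with (\<lambda>x. True) Y Y (g' \<circ> g) id" "homotopic_with (\<lambda>x. True) Z Z (g \<circ> g') id"
    using assms(2) unfolding homotopy_equivalence_map_def by blast
  have "homotopic_with (\<lambda>x. True) X X (f' \<circ> (g' \<circ> g) \<circ> f) (f' \<circ> id \<circ> f)"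
    using f g by (intro homotopic_compose) auto
  then have "homotopic_with (\<lambda>x. True) X X ((f' \<circ> g') \<circ> (g \<circ> f)) id"
    using f(3) by (auto simp: o_assoc intro: homotopic_with_trans)
  moreover have "homotopic_with (\<lambda>x. True) Z Z (g \<circ> (f \<circ> f') \<circ> g') (g \<circ> id \<circ> g')"
    using f g by (intro homotopic_compose) auto
  then have "homotopic_with (\<lambda>x. True) Z Z ((g \<circ> f) \<circ> (f' \<circ> g')) id"
    using g(4) by (auto simp: o_assoc intro: homotopic_with_trans)
  ultimately show ?thesis
    unfolding homotopy_equivalence_map_def using f g by (blast intro: continuous_map_compose)
qed

lemma homotopy_equivalence_map_two_out_of_three:
  assumes "homotopy_equivalence_map X Y f" "homotopy_equivalence_map X Z (g \<circ> f)"
    and "continuous_map Y Z g"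
  shows "homotopy_equivalence_map Y Z g"
proof -
  obtain f' where f: "continuous_map X Y f" "continuous_map Y X f'"
    "homotopic_with (\<lambda>x. True) X X (f' \<circ> f) id" "homotopic_with (\<lambda>x. True) Y Y (f \<circ> f') id"
    using assms(1) unfolding homotopy_equivalence_map_def by blast
  obtain h where h: "continuous_map Z X h"
    "homotopic_with (\<lambda>x. True) X X (h \<circ> (g \<circ> f)) id"
    "homotopic_with (\<lambda>x. True) Z Z ((g \<circ> f) \<circ> h) id"
    using assms(2) unfolding homotopy_equivalence_map_def by blast
  have fhg: "continuous_map Y Y (f \<circ> h \<circ> g)"
    using f h assms(3) by (blast intro: continuous_map_compose)
  have "homotopic_with (\<lambda>x. True) Y Y ((f \<circ> h \<circ> g) \<circ> id) ((f \<circ> h \<circ> g) \<circ> (f \<circ> f'))"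
    by (rule homotopic_compose[OF homotopic_with_symD[OF f(4)]]) (simp add: fhg)
  moreover have "homotopic_with (\<lambda>x. True) Y Y (f \<circ> (h \<circ> (g \<circ> f)) \<circ> f') (f \<circ> id \<circ> f')"
    using f h by (intro homotopic_compose) auto
  ultimately have "homotopic_with (\<lambda>x. True) Y Y ((f \<circ> h) \<circ> g) id"
    using f(4) by (auto simp: o_assoc elim!: homotopic_with_trans)
  moreover have "homotopic_with (\<lambda>x. True) Z Z (g \<circ> (f \<circ> h)) id"
    using h(3) by (simp add: o_assoc)
  ultimately show ?thesis
    unfolding homotopy_equivalence_map_def using f h assms(3) by (blast intro: continuous_map_compose)
qed

lemma topspace_realization:
  "topspace (realization K) =
     {f. (\<forall>x. 0 \<le> f x) \<and> finite {x. f x \<noteq> 0} \<and> {x. f x \<noteq> 0} \<in> K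
         \<and> sum f {x. f x \<noteq> 0} = 1}"
  unfolding realization_def by (simp add: topspace_product_topology)

lemma realization_pointI:
  assumes "\<And>x. 0 \<le> f x" and "finite F" "{x. f x \<noteq> 0} \<subseteq> F" "sum f F = 1"
    and "{x. f x \<noteq> 0} \<in> K"
  shows "f \<in> topspace (realization K)"
proof -
  have "sum f F = sum f {x. f x \<noteq> 0}"
    using assms(2,3) by (intro sum.mono_neutral_right) auto
  then show ?thesis
    using assms finite_subset[OF assms(3,2)] by (simp add: topspace_realization)
qed

lemma realization_point_nonneg: "f \<in> topspace (realization K) \<Longrightarrow> 0 \<le> f x"
  by (simp add: topspace_realization)

lemma realization_point_support:
  "f \<in> topspace (realization K) \<Longrightarrow> {x. f x \<noteq> 0} \<in> K"
  by (simp add: topspace_realization)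

lemma realization_point_sum:
  assumes "f \<in> topspace (realization K)" "finite F" "{x. f x \<noteq> 0} \<subseteq> F"
  shows "sum f F = 1"
proof -
  have "sum f F = sum f {x. f x \<noteq> 0}"
    using assms(2,3) by (intro sum.mono_neutral_right) auto
  then show ?thesis
    using assms(1) by (simp add: topspace_realization)
qed

lemma continuous_map_into_realization:
  "continuous_map X (realization K) g \<longleftrightarrow>
     (\<forall>x. continuous_map X euclideanreal (\<lambda>a. g a x)) \<and> g \<in> topspace X \<rightarrow> topspace (realization K)"
  by (simp add: realization_def continuous_map_in_subtopology continuous_map_componentwise_UNIV
      topspace_product_topology)

lemma continuous_map_realization_coordinate:
  "continuous_map (realization K) euclideanreal (\<lambda>f. f x)"
  unfolding realization_def
  by (rule continuous_map_from_subtopology)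
    (use continuous_map_product_projection[of x UNIV "\<lambda>_. euclideanreal"] in simp)

lemma continuous_map_realization_inclusion:
  "K \<subseteq> L \<Longrightarrow> continuous_map (realization K) (realization L) id"
  unfolding continuous_map_into_realization
  using continuous_map_realization_coordinate by (auto simp: topspace_realization)

text \<open>The straight-line homotopy stays inside the simplex spanned by the two supports.\<close>
lemma homotopic_into_realization_if_supports_span_simplex:
  assumes down: "\<And>S T. S \<in> K \<Longrightarrow> T \<subseteq> S \<Longrightarrow> T \<in> K"
    and p: "continuous_map X (realization K) p"
    and q: "continuous_map X (realization K) q"
    and span: "\<And>a. a \<in> topspace X \<Longrightarrow> {x. p a x \<noteq> 0} \<union> {x. q a x \<noteq> 0} \<in> K"
  shows "homotopic_with (\<lambda>_. True) X (realization K) p q"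
  unfolding homotopic_with_def
proof (intro exI conjI)
  let ?I = "top_of_set {0..1::real}"
  let ?H = "\<lambda>(t::real, a). (\<lambda>x. (1 - t) * p a x + t * q a x)"
  have t: "continuous_map (prod_topology ?I X) euclideanreal fst"
    by (metis continuous_map_fst continuous_map_in_subtopology)
  have coord: "continuous_map (prod_topology ?I X) euclideanreal (\<lambda>z. h (snd z) x)"
    if "continuous_map X (realization K) h" for h x
  proof -
    have "continuous_map X euclideanreal (\<lambda>a. h a x)"
      using that by (simp add: continuous_map_into_realization)
    from continuous_map_compose[OF continuous_map_snd this] show ?thesis by (simp add: o_def)
  qed
  have "continuous_map (prod_topology ?I X) euclideanreal
          (\<lambda>z. (1 - fst z) * p (snd z) x + fst z * q (snd z) x)" for x
    by (intro continuous_intros t coord p q)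
  then have "continuous_map (prod_topology ?I X) euclideanreal (\<lambda>ta. ?H ta x)" for x
    by (simp add: case_prod_beta)
  moreover have "?H (t, a) \<in> topspace (realization K)" if "t \<in> {0..1}" "a \<in> topspace X" for t a
  proof -
    have pa: "p a \<in> topspace (realization K)" and qa: "q a \<in> topspace (realization K)"
      using p q that(2) by (auto simp: continuous_map_into_realization)
    let ?S = "{x. p a x \<noteq> 0} \<union> {x. q a x \<noteq> 0}"
    have fin: "finite ?S" using pa qa by (simp add: topspace_realization)
    show ?thesis
    proof (simp, rule realization_pointI[OF _ fin])
      show "0 \<le> (1 - t) * p a x + t * q a x" for x
        using that realization_point_nonneg[OF pa] realization_point_nonneg[OF qa] by simp
      show "{x. (1 - t) * p a x + t * q a x \<noteq> 0} \<subseteq> ?S" by auto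
      then show "{x. (1 - t) * p a x + t * q a x \<noteq> 0} \<in> K"
        using down span[OF that(2)] by blast
      show "(\<Sum>x\<in>?S. (1 - t) * p a x + t * q a x) = 1"
        using realization_point_sum[OF pa fin] realization_point_sum[OF qa fin]
        by (simp add: sum.distrib flip: sum_distrib_left)
    qed
  qed
  ultimately show "continuous_map (prod_topology ?I X) (realization K) ?H"
    by (auto simp: continuous_map_into_realization)
qed auto

lemma indep_complex_mono: "A \<subseteq> B \<Longrightarrow> indep_complex A E \<subseteq> indep_complex B E"
  unfolding indep_complex_def by blast

lemma indep_complex_downward_closed: "S \<in> indep_complex W E \<Longrightarrow> T \<subseteq> S \<Longrightarrow> T \<in> indep_complex W E"
  unfolding indep_complex_def by blast

lemma indep_complex_point_support_subset:
  "f \<in> topspace (realization (indep_complex W E)) \<Longrightarrow> {x. f x \<noteq> 0} \<subseteq> W"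
  using realization_point_support unfolding indep_complex_def by blast

text \<open>The retraction moves the weight of Y onto x; domination keeps the old support together
  with x independent, so the retraction is straight-line homotopic to the identity.\<close>
lemma homotopy_equivalence_map_delete_dominated:
  assumes G: "simple_graph V E" and W: "W \<subseteq> V"
    and x: "x \<in> W" "x \<notin> Y" and Y: "Y \<subseteq> W"
    and dom: "\<And>y z. y \<in> Y \<Longrightarrow> z \<in> W \<Longrightarrow> E x z \<Longrightarrow> E y z"
  shows "homotopy_equivalence_map (realization (indep_complex (W - Y) E))
           (realization (indep_complex W E)) id"
proof -
  let ?K = "indep_complex W E" and ?L = "indep_complex (W - Y) E"
  define r where "r f = (\<lambda>z. if z \<in> Y then 0 else if z = x then f x + sum f Y else f z)"
    for f :: "'a \<Rightarrow> real"
  have finW: "finite W"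
    using G W finite_subset unfolding simple_graph_def by blast
  have finY: "finite Y"
    using finW Y finite_subset by blast
  have sym: "E a b \<Longrightarrow> E b a" and irr: "\<not> E a a" for a b
    using G unfolding simple_graph_def by auto
  have r_support: "{z. r f z \<noteq> 0} \<union> {z. f z \<noteq> 0} \<in> ?K" if f: "f \<in> topspace (realization ?K)" for f
  proof -
    have supp: "{z. f z \<noteq> 0} \<in> ?K" using realization_point_support[OF f] .
    show ?thesis
    proof (cases "\<exists>y\<in>Y. f y \<noteq> 0")
      case True
      then obtain y where y: "y \<in> Y" "f y \<noteq> 0" by blast
      have "\<not> E x b" if "f b \<noteq> 0" for b
        using dom[OF y(1)] supp y(2) that unfolding indep_complex_def by blast
      then have "insert x {z. f z \<noteq> 0} \<in> ?K"
        using supp x(1) sym irr unfolding indep_complex_def by blast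
      moreover have "{z. r f z \<noteq> 0} \<subseteq> insert x {z. f z \<noteq> 0}"
        by (auto simp: r_def)
      ultimately show ?thesis
        by (elim indep_complex_downward_closed) auto
    next
      case False
      then have "r f = f" by (auto simp: r_def)
      then show ?thesis using supp by simp
    qed
  qed
  have r_point: "r f \<in> topspace (realization ?L)" if f: "f \<in> topspace (realization ?K)" for f
  proof (rule realization_pointI)
    show "0 \<le> r f z" for z
      using realization_point_nonneg[OF f] by (simp add: r_def sum_nonneg add_nonneg_nonneg)
    show "finite (W - Y)" using finW by simp
    show supp: "{z. r f z \<noteq> 0} \<subseteq> W - Y"
      using indep_complex_point_support_subset[OF f] x(1) by (auto simp: r_def)
    have "sum (r f) (W - Y) = sum (\<lambda>z. f z + (if z = x then sum f Y else 0)) (W - Y)"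
      by (rule sum.cong) (auto simp: r_def)
    also have "\<dots> = sum f (W - Y) + sum f Y"
      using x finW by (simp add: sum.distrib)
    also have "\<dots> = sum f W"
      using Y finW by (simp add: sum.subset_diff)
    also have "\<dots> = 1"
      using realization_point_sum[OF f finW indep_complex_point_support_subset[OF f]] .
    finally show "sum (r f) (W - Y) = 1" .
    show "{z. r f z \<noteq> 0} \<in> ?L"
      using r_support[OF f] supp unfolding indep_complex_def by blast
  qed
  have r_cont: "continuous_map (realization ?K) (realization ?L) r"
    unfolding continuous_map_into_realization
  proof (intro conjI allI)
    show "continuous_map (realization ?K) euclideanreal (\<lambda>f. r f z)" for z
    proof -
      have "(\<lambda>f. r f z) = (if z \<in> Y then (\<lambda>f. 0) else if z = x then (\<lambda>f. f x + sum f Y) else (\<lambda>f. f z))"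
        by (auto simp: r_def)
      then show ?thesis
        by (simp add: continuous_map_add continuous_map_sum continuous_map_realization_coordinate finY)
    qed
    show "r \<in> topspace (realization ?K) \<rightarrow> topspace (realization ?L)"
      using r_point by blast
  qed
  have incl: "continuous_map (realization ?L) (realization ?K) id"
    by (intro continuous_map_realization_inclusion indep_complex_mono) auto
  have "homotopic_with (\<lambda>x. True) (realization ?L) (realization ?L) (r \<circ> id) id"
  proof (rule homotopic_with_id2)
    fix f assume "f \<in> topspace (realization ?L)"
    then have "\<forall>y\<in>Y. f y = 0"
      using indep_complex_point_support_subset by blast
    then show "r (id f) = f"
      by (simp add: r_def fun_eq_iff sum.neutral)
  qed
  moreover have "homotopic_with (\<lambda>x. True) (realization ?K) (realization ?K) (id \<circ> r) id"
    by (rule homotopic_into_realization_if_supports_span_simplex[OF indep_complex_downward_closed])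
      (use continuous_map_compose[OF r_cont incl] r_support in auto)
  ultimately show ?thesis
    unfolding homotopy_equivalence_map_def using incl r_cont by blast
qed

lemma string_nth_eq_iff:
  "is_string V E n v ps \<Longrightarrow> i < n \<Longrightarrow> j < n \<Longrightarrow> ps ! i = ps ! j \<longleftrightarrow> i = j"
  by (simp add: is_string_def nth_eq_iff_index_eq)

lemma string_nth_mem: "is_string V E n v ps \<Longrightarrow> i < n \<Longrightarrow> ps ! i \<in> set ps"
  by (simp add: is_string_def)

lemma string_adjacent_iff:
  "is_string V E n v ps \<Longrightarrow> i < n \<Longrightarrow> j < n \<Longrightarrow> E (ps ! i) (ps ! j) \<longleftrightarrow> i = j + 1 \<or> j = i + 1"
  by (simp add: is_string_def)

lemma string_neighbour_index:
  assumes G: "simple_graph V E" and P: "is_string V E n v ps"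
    and i: "1 \<le> i" "i < n" and e: "E (ps ! i) z"
  obtains j where "j < n" "z = ps ! j" "i = j + 1 \<or> j = i + 1"
proof -
  have "z \<in> V" using G e unfolding simple_graph_def by blast
  then have "z \<in> set ps" using P i e unfolding is_string_def by blast
  then obtain j where j: "j < n" "z = ps ! j"
    using P by (auto simp: is_string_def in_set_conv_nth)
  moreover have "i = j + 1 \<or> j = i + 1"
    using string_adjacent_iff[OF P i(2) j(1)] e j(2) by simp
  ultimately show thesis using that by blast
qed

lemma string_base_neighbour_notin:
  assumes P: "is_string V E n v ps" and u: "u \<in> nbhd V E v" "u \<noteq> ps ! 1"
  shows "u \<notin> set ps"
proof
  assume "u \<in> set ps"
  then obtain j where j: "j < n" "u = ps ! j"
    using P by (auto simp: is_string_def in_set_conv_nth)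
  have "0 < n" "ps ! 0 = v" using P by (auto simp: is_string_def)
  then have "j = 1"
    using string_adjacent_iff[OF P \<open>0 < n\<close> j(1)] u(1) j(2) by (simp add: nbhd_def)
  then show False using u(2) j(2) by simp
qed

lemma string_second_vertex_neighbour:
  assumes G: "simple_graph V E" and P: "is_string V E (3 * k + 2) v ps"
    and e: "E (ps ! 1) z" and z: "z \<notin> (\<lambda>j. ps ! (3 * j + 2)) ` {..<k}"
  shows "z = v"
proof -
  have "1 < 3 * k + 2" by simp
  then obtain j where j: "j < 3 * k + 2" "z = ps ! j" "1 = j + 1 \<or> j = 1 + 1"
    using string_neighbour_index[OF G P order_refl _ e] by blast
  have "j \<noteq> 2"
  proof
    assume "j = 2"
    then have "z \<in> (\<lambda>j. ps ! (3 * j + 2)) ` {..<k}"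
      using j by (intro image_eqI[where x = 0]) (auto simp: numeral_2_eq_2)
    then show False using z by blast
  qed
  then show ?thesis using j P by (auto simp: is_string_def)
qed

text \<open>Deleting from the far end of the string, once p_(3m+5) is gone the vertex
  p_(3m+4) has p_(3m+3) as its only neighbour and so dominates p_(3m+2).\<close>
lemma homotopy_equivalence_map_delete_string_thirds:
  assumes G: "simple_graph V E" and P: "is_string V E (3 * k + 2) v ps"
    and W: "set ps \<subseteq> W" "W \<subseteq> V"
  shows "homotopy_equivalence_map
           (realization (indep_complex (W - (\<lambda>j. ps ! (3 * j + 2)) ` {..<k}) E))
           (realization (indep_complex W E)) id"
proof -
  let ?T = "\<lambda>m. (\<lambda>j. ps ! (3 * j + 2)) ` {m..<k}"
  have inj: "ps ! i = ps ! j \<longleftrightarrow> i = j" if "i < 3 * k + 2" "j < 3 * k + 2" for i j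
    using string_nth_eq_iff[OF P that] .
  have mem: "ps ! i \<in> W" if "i < 3 * k + 2" for i
    using string_nth_mem[OF P that] W by blast
  have "homotopy_equivalence_map (realization (indep_complex (W - ?T m) E))
          (realization (indep_complex W E)) id" if "m \<le> k" for m
    using that
  proof (induction m rule: inc_induct)
    case base
    show ?case
      using homotopy_equivalence_map_id[of "realization (indep_complex W E)"] by (simp add: id_def)
  next
    case (step m)
    let ?x = "ps ! (3 * m + 4)" and ?y = "ps ! (3 * m + 2)"
    have x: "?x \<in> W - ?T (Suc m)" "?x \<notin> {?y}"
      using step.hyps mem inj by auto
    have y: "{?y} \<subseteq> W - ?T (Suc m)"
      using step.hyps mem inj by auto
    have dom: "E ?y z" if z: "z \<in> W - ?T (Suc m)" and e: "E ?x z" for z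
    proof -
      have "1 \<le> 3 * m + 4" "3 * m + 4 < 3 * k + 2" using step.hyps by simp_all
      then obtain j where j: "j < 3 * k + 2" "z = ps ! j" "3 * m + 4 = j + 1 \<or> j = 3 * m + 4 + 1"
        using string_neighbour_index[OF G P _ _ e] by blast
      have "j \<noteq> 3 * Suc m + 2"
      proof
        assume "j = 3 * Suc m + 2"
        then have "z \<in> ?T (Suc m)"
          using j by (intro image_eqI[where x = "Suc m"]) auto
        then show False using z by blast
      qed
      then have "j = 3 * m + 3" using j(3) by auto
      then show ?thesis
        using string_adjacent_iff[OF P, of "3 * m + 2" j] j step.hyps by simp
    qed
    have "{m..<k} = insert m {Suc m..<k}"
      using step.hyps by auto
    then have "W - ?T (Suc m) - {?y} = W - ?T m"
      by auto
    moreover have "homotopy_equivalence_map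
        (realization (indep_complex (W - ?T (Suc m) - {?y}) E))
        (realization (indep_complex (W - ?T (Suc m)) E)) id"
      by (rule homotopy_equivalence_map_delete_dominated[OF G _ x y]) (use dom W in auto)
    ultimately have "homotopy_equivalence_map (realization (indep_complex (W - ?T m) E))
        (realization (indep_complex (W - ?T (Suc m)) E)) id"
      by simp
    from homotopy_equivalence_map_compose[OF this step.IH] show ?case
      by simp
  qed
  from this[of 0] show ?thesis by (simp add: atLeast0LessThan)
qed

lemma homotopy_equivalence_map_delete_base_neighbours:
  assumes G: "simple_graph V E" and P: "is_string V E (3 * k + 2) v ps"
  defines "T \<equiv> (\<lambda>j. ps ! (3 * j + 2)) ` {..<k}" and "U \<equiv> nbhd V E v - {ps ! 1}"
  shows "homotopy_equivalence_map (realization (indep_complex (V - T - U) E))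
           (realization (indep_complex (V - T) E)) id"
proof (rule homotopy_equivalence_map_delete_dominated[OF G Diff_subset])
  have ps: "set ps \<subseteq> V" "ps ! 1 \<in> set ps" "T \<subseteq> set ps"
    using P string_nth_mem[OF P] by (auto simp: is_string_def T_def)
  then show "U \<subseteq> V - T"
    using string_base_neighbour_notin[OF P] by (auto simp: U_def nbhd_def)
  show "ps ! 1 \<in> V - T" "ps ! 1 \<notin> U"
    using ps string_nth_eq_iff[OF P] by (auto simp: T_def U_def)
  show "E u z" if u: "u \<in> U" and z: "z \<in> V - T" and e: "E (ps ! 1) z" for u z
  proof -
    have "z = v"
      using string_second_vertex_neighbour[OF G P e] z by (simp add: T_def)
    moreover have "E v u"
      using u by (simp add: U_def nbhd_def)
    ultimately show "E u z"
      using G unfolding simple_graph_def by blast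
  qed
qed

theorem proposition2p7:
  fixes V :: "'a set" and E :: "'a \<Rightarrow> 'a \<Rightarrow> bool" and k :: nat
    and v :: 'a and ps :: "'a list"
  assumes "simple_graph V E"
    and "is_string V E (3 * k + 2) v ps"
  shows "homotopy_equivalence_map
           (realization (indep_complex (V - (nbhd V E v - {ps ! 1})) E))
           (realization (indep_complex V E)) id"
proof -
  define U where "U = nbhd V E v - {ps ! 1}"
  define T where "T = (\<lambda>j. ps ! (3 * j + 2)) ` {..<k}"
  have ps: "set ps \<subseteq> V"
    using assms(2) by (simp add: is_string_def)
  then have psU: "set ps \<subseteq> V - U"
    using string_base_neighbour_notin[OF assms(2)] by (auto simp: U_def)
  have "homotopy_equivalence_map (realization (indep_complex (V - T - U) E))
          (realization (indep_complex (V - T) E)) id"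
    using homotopy_equivalence_map_delete_base_neighbours[OF assms] unfolding T_def U_def .
  moreover have "homotopy_equivalence_map (realization (indep_complex (V - T) E))
                   (realization (indep_complex V E)) id"
    using homotopy_equivalence_map_delete_string_thirds[OF assms ps order_refl] unfolding T_def .
  ultimately have "homotopy_equivalence_map (realization (indep_complex (V - T - U) E))
                     (realization (indep_complex V E)) (id \<circ> id)"
    by (rule homotopy_equivalence_map_compose)
  moreover have "homotopy_equivalence_map (realization (indep_complex (V - U - T) E))
                   (realization (indep_complex (V - U) E)) id"
    using homotopy_equivalence_map_delete_string_thirds[OF assms psU Diff_subset] unfolding T_def .
  moreover have "V - T - U = V - U - T"
    by blast
  moreover have "continuous_map (realization (indep_complex (V - U) E))
                   (realization (indep_complex V E)) id"
    by (intro continuous_map_realization_inclusion indep_complex_mono) auto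
  ultimately show ?thesis
    unfolding U_def by (metis homotopy_equivalence_map_two_out_of_three)
qed

end
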